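(* Consider a seller with one item and a single ex-post rational buyer; the item's quality $q\in Q=[q_1,q_2]$ has CDF $G$ and density $g$ and is observed only by the seller; the buyer's valuation $v(q)$ is monotone increasing in $q$ with inverse $v^{-1}$. The optimal revenue over obedient fixed-price signaling mechanisms equals the optimal revenue over fixed-price mechanisms without signaling (both equal to $\max_p[1-G(v^{-1}(p))]\cdot p$).
   Context: Fixed-price mechanism (no signaling): the seller posts price $p$; the ex-post rational buyer buys iff $v(q)\ge p$; revenue is $p\cdot\Pr[v(q)\ge p]$. Fixed-price signaling mechanism: a pair $(\pi,p)$ with $\pi:Q\to[0,1]$ the probability of sending signal 1 ("buy") at quality $q$; it is obedient if $\int_{q_1}^{v^{-1}(p)}\pi(q)g(q)\,\mathrm{d}q=0$ and $\int_{v^{-1}(p)}^{q_2}[1-\pi(q)]g(q)\,\mathrm{d}q=0$; its revenue is $p\int_Q\pi(q)g(q)\,\mathrm{d}q$. *)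

theory Defs
  imports "HOL-Analysis.Analysis"
begin

definition quality_cdf :: "real \<Rightarrow> (real \<Rightarrow> real) \<Rightarrow> real \<Rightarrow> real" where
  "quality_cdf q1 g x = (LINT q:{q1..x}|lborel. g q)"

definition fixed_price_revenue ::
  "real \<Rightarrow> real \<Rightarrow> (real \<Rightarrow> real) \<Rightarrow> (real \<Rightarrow> real) \<Rightarrow> real \<Rightarrow> real" where
  "fixed_price_revenue q1 q2 g v p = p * (LINT q:{q\<in>{q1..q2}. p \<le> v q}|lborel. g q)"

text \<open>Obedience of a fixed-price signaling mechanism (pi,p).  Since v is strictly
  increasing, {q in Q. v q < p} = [q1, v^{-1}(p)) and {q in Q. v q >= p} = [v^{-1}(p), q2].\<close>
definition obedient ::
  "real \<Rightarrow> real \<Rightarrow> (real \<Rightarrow> real) \<Rightarrow> (real \<Rightarrow> real) \<Rightarrow> (real \<Rightarrow> real) \<Rightarrow> real \<Rightarrow> bool" where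
  "obedient q1 q2 g v \<pi> p \<longleftrightarrow>
     (LINT q:{q\<in>{q1..q2}. v q < p}|lborel. \<pi> q * g q) = 0 \<and>
     (LINT q:{q\<in>{q1..q2}. p \<le> v q}|lborel. (1 - \<pi> q) * g q) = 0"

definition signaling_mechanism :: "real \<Rightarrow> real \<Rightarrow> (real \<Rightarrow> real) \<Rightarrow> bool" where
  "signaling_mechanism q1 q2 \<pi> \<longleftrightarrow>
     \<pi> \<in> borel_measurable lborel \<and> (\<forall>q\<in>{q1..q2}. 0 \<le> \<pi> q \<and> \<pi> q \<le> 1)"

definition signaling_revenue :: "real \<Rightarrow> real \<Rightarrow> (real \<Rightarrow> real) \<Rightarrow> (real \<Rightarrow> real) \<Rightarrow> real \<Rightarrow> real" where
  "signaling_revenue q1 q2 g \<pi> p = p * (LINT q:{q1..q2}|lborel. \<pi> q * g q)"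

end

theory Submission
  imports Defs
begin

text \<open>Split Q into the regions {v < p} and {v \<ge> p}.  The two obedience integrals say that
  an obedient mechanism sends ``buy'' with total g-mass 0 on the first and with the full g-mass
  of the second, so it earns exactly the fixed-price revenue at p; conversely the indicator of
  {v \<ge> p} is obedient.  Hence both kinds of mechanism have the same set of revenues.  Every
  price is weakly dominated by a price v q with q \<in> Q, whose revenue (1 - G q) * v q is continuous
  in q and so attains its maximum on the compact interval Q.\<close>

lemma closed_acceptance_region:
  fixes v :: "real \<Rightarrow> real"
  assumes "continuous_on {a..b} v"
  shows "closed {q\<in>{a..b}. p \<le> v q}"
proof -
  have "{q\<in>{a..b}. p \<le> v q} = {a..b} \<inter> v -` {p..}" by auto
  then show ?thesis using continuous_closed_preimage[OF assms] by auto
qed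

lemma sets_lborel_acceptance_regions:
  fixes v :: "real \<Rightarrow> real"
  assumes "continuous_on {a..b} v"
  shows "{q\<in>{a..b}. p \<le> v q} \<in> sets lborel" "{q\<in>{a..b}. v q < p} \<in> sets lborel"
proof -
  show accept: "{q\<in>{a..b}. p \<le> v q} \<in> sets lborel"
    using closed_acceptance_region[OF assms] by auto
  have "{q\<in>{a..b}. v q < p} = {a..b} - {q\<in>{a..b}. p \<le> v q}" by auto
  then show "{q\<in>{a..b}. v q < p} \<in> sets lborel" using accept by auto
qed

lemma set_integrable_signaling_mechanism_times:
  assumes "set_integrable lborel {a..b} g" "signaling_mechanism a b \<pi>"
  shows "set_integrable lborel {a..b} (\<lambda>q. \<pi> q * g q)"
proof (rule set_integrable_bound[OF assms(1)])
  have "\<pi> \<in> borel_measurable lborel"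
    using assms(2) by (simp add: signaling_mechanism_def)
  moreover have "(\<lambda>q. indicator {a..b} q *\<^sub>R g q) \<in> borel_measurable lborel"
    using assms(1) unfolding set_integrable_def by (rule borel_measurable_integrable)
  ultimately have "(\<lambda>q. \<pi> q * (indicator {a..b} q *\<^sub>R g q)) \<in> borel_measurable lborel"
    by measurable
  then show "set_borel_measurable lborel {a..b} (\<lambda>q. \<pi> q * g q)"
    unfolding set_borel_measurable_def by (simp add: mult.left_commute)
  show "AE q in lborel. q \<in> {a..b} \<longrightarrow> norm (\<pi> q * g q) \<le> norm (g q)"
    using assms(2)
    by (intro AE_I2) (auto simp: signaling_mechanism_def abs_mult intro!: mult_left_le_one_le)
qed

lemma obedient_signaling_revenue_eq_fixed_price_revenue:
  assumes g: "set_integrable lborel {q1..q2} g" and v: "continuous_on {q1..q2} v"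
    and mech: "signaling_mechanism q1 q2 \<pi>" and obed: "obedient q1 q2 g v \<pi> p"
  shows "signaling_revenue q1 q2 g \<pi> p = fixed_price_revenue q1 q2 g v p"
proof -
  define A where "A = {q\<in>{q1..q2}. v q < p}"
  define B where "B = {q\<in>{q1..q2}. p \<le> v q}"
  have sets: "A \<in> sets lborel" "B \<in> sets lborel"
    unfolding A_def B_def using sets_lborel_acceptance_regions[OF v] by auto
  have \<pi>g: "set_integrable lborel {q1..q2} (\<lambda>q. \<pi> q * g q)"
    using set_integrable_signaling_mechanism_times[OF g mech] .
  have \<pi>gA: "set_integrable lborel A (\<lambda>q. \<pi> q * g q)"
    by (rule set_integrable_subset[OF \<pi>g sets(1)]) (auto simp: A_def)
  have \<pi>gB: "set_integrable lborel B (\<lambda>q. \<pi> q * g q)"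
    by (rule set_integrable_subset[OF \<pi>g sets(2)]) (auto simp: B_def)
  have gB: "set_integrable lborel B g"
    by (rule set_integrable_subset[OF g sets(2)]) (auto simp: B_def)
  have "(LINT q:{q1..q2}|lborel. \<pi> q * g q)
      = (LINT q:A|lborel. \<pi> q * g q) + (LINT q:B|lborel. \<pi> q * g q)"
  proof -
    have "A \<inter> B = {}" "A \<union> B = {q1..q2}" by (auto simp: A_def B_def)
    then show ?thesis using set_integral_Un[OF _ \<pi>gA \<pi>gB] by simp
  qed
  also have "(LINT q:A|lborel. \<pi> q * g q) = 0"
    using obed by (simp add: obedient_def A_def)
  also have "(LINT q:B|lborel. \<pi> q * g q)
      = (LINT q:B|lborel. g q) - (LINT q:B|lborel. (1 - \<pi> q) * g q)"
    using set_integral_diff(2)[OF gB \<pi>gB] by (simp add: left_diff_distrib)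
  also have "(LINT q:B|lborel. (1 - \<pi> q) * g q) = 0"
    using obed by (simp add: obedient_def B_def)
  finally show ?thesis
    by (simp add: signaling_revenue_def fixed_price_revenue_def B_def)
qed

lemma acceptance_region_mechanism:
  fixes v :: "real \<Rightarrow> real" and p :: real
  assumes v: "continuous_on {q1..q2} v"
  defines "\<pi> \<equiv> indicator {q\<in>{q1..q2}. p \<le> v q} :: real \<Rightarrow> real"
  shows "signaling_mechanism q1 q2 \<pi>" "obedient q1 q2 g v \<pi> p"
    "signaling_revenue q1 q2 g \<pi> p = fixed_price_revenue q1 q2 g v p"
proof -
  note sets = sets_lborel_acceptance_regions[OF v, of p]
  show "signaling_mechanism q1 q2 \<pi>"
    using sets by (auto simp: signaling_mechanism_def \<pi>_def indicator_def)
  have "(LINT q:{q\<in>{q1..q2}. v q < p}|lborel. \<pi> q * g q) = (LINT q:{q\<in>{q1..q2}. v q < p}|lborel. 0)"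
    by (rule set_lebesgue_integral_cong[OF sets(2)]) (auto simp: \<pi>_def)
  moreover have "(LINT q:{q\<in>{q1..q2}. p \<le> v q}|lborel. (1 - \<pi> q) * g q)
      = (LINT q:{q\<in>{q1..q2}. p \<le> v q}|lborel. 0)"
    by (rule set_lebesgue_integral_cong[OF sets(1)]) (auto simp: \<pi>_def)
  ultimately show "obedient q1 q2 g v \<pi> p"
    by (simp add: obedient_def set_lebesgue_integral_def)
  have "(LINT q:{q1..q2}|lborel. \<pi> q * g q) = (LINT q:{q\<in>{q1..q2}. p \<le> v q}|lborel. g q)"
    unfolding set_lebesgue_integral_def \<pi>_def
    by (rule Bochner_Integration.integral_cong) (auto simp: indicator_def)
  then show "signaling_revenue q1 q2 g \<pi> p = fixed_price_revenue q1 q2 g v p"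
    by (simp add: signaling_revenue_def fixed_price_revenue_def)
qed

lemma obedient_signaling_revenues_eq_fixed_price_revenues:
  assumes "set_integrable lborel {q1..q2} g" "continuous_on {q1..q2} v"
  shows "{signaling_revenue q1 q2 g \<pi> p | \<pi> p.
            signaling_mechanism q1 q2 \<pi> \<and> obedient q1 q2 g v \<pi> p}
       = range (fixed_price_revenue q1 q2 g v)"
proof (intro equalityI subsetI)
  fix r assume "r \<in> {signaling_revenue q1 q2 g \<pi> p | \<pi> p.
            signaling_mechanism q1 q2 \<pi> \<and> obedient q1 q2 g v \<pi> p}"
  then show "r \<in> range (fixed_price_revenue q1 q2 g v)"
    using obedient_signaling_revenue_eq_fixed_price_revenue[OF assms] by auto
next
  fix r assume "r \<in> range (fixed_price_revenue q1 q2 g v)"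
  then obtain p where r: "r = fixed_price_revenue q1 q2 g v p" by blast
  let ?\<pi> = "indicator {q\<in>{q1..q2}. p \<le> v q} :: real \<Rightarrow> real"
  have "signaling_mechanism q1 q2 ?\<pi>" "obedient q1 q2 g v ?\<pi> p"
    "r = signaling_revenue q1 q2 g ?\<pi> p"
    using acceptance_region_mechanism[OF assms(2)] r by auto
  then show "r \<in> {signaling_revenue q1 q2 g \<pi> p | \<pi> p.
            signaling_mechanism q1 q2 \<pi> \<and> obedient q1 q2 g v \<pi> p}" by blast
qed

lemma quality_cdf_eq_integral:
  assumes "set_integrable lborel {q1..q2} g" "x \<in> {q1..q2}"
  shows "quality_cdf q1 g x = integral {q1..x} g"
proof -
  have "set_integrable lborel {q1..x} g"
    by (rule set_integrable_subset[OF assms(1)]) (use assms(2) in auto)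
  then show ?thesis
    unfolding quality_cdf_def by (rule set_borel_integral_eq_integral(2))
qed

lemma continuous_on_quality_cdf:
  assumes "set_integrable lborel {q1..q2} g"
  shows "continuous_on {q1..q2} (quality_cdf q1 g)"
proof -
  have "g integrable_on {q1..q2}"
    using set_borel_integral_eq_integral(1)[OF assms] .
  from indefinite_integral_continuous_1[OF this] show ?thesis
    by (rule continuous_on_eq) (simp add: quality_cdf_eq_integral[OF assms])
qed

lemma set_integral_upper_tail:
  assumes g: "set_integrable lborel {q1..q2} g" and x: "x \<in> {q1..q2}"
  shows "(LINT q:{x..q2}|lborel. g q) = (LINT q:{q1..q2}|lborel. g q) - quality_cdf q1 g x"
proof -
  have "set_integrable lborel {x..q2} g"
    by (rule set_integrable_subset[OF g]) (use x in auto)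
  then have "(LINT q:{x..q2}|lborel. g q) = integral {x..q2} g"
    by (rule set_borel_integral_eq_integral(2))
  moreover have "integral {q1..x} g + integral {x..q2} g = integral {q1..q2} g"
    using Henstock_Kurzweil_Integration.integral_combine[OF _ _ set_borel_integral_eq_integral(1)[OF g]] x
    by auto
  ultimately show ?thesis
    using set_borel_integral_eq_integral(2)[OF g] quality_cdf_eq_integral[OF g x] by simp
qed

lemma fixed_price_revenue_at_valuation:
  fixes v :: "real \<Rightarrow> real"
  assumes g: "set_integrable lborel {q1..q2} g" "(LINT q:{q1..q2}|lborel. g q) = 1"
    and v: "strict_mono_on {q1..q2} v" and x: "x \<in> {q1..q2}"
  shows "fixed_price_revenue q1 q2 g v (v x) = (1 - quality_cdf q1 g x) * v x"
proof -
  have "{q\<in>{q1..q2}. v x \<le> v q} = {x..q2}"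
    using x strict_mono_on_less_eq[OF v x] by auto
  then show ?thesis
    using set_integral_upper_tail[OF g(1) x] g(2) by (simp add: fixed_price_revenue_def)
qed

text \<open>Prices below v q1 are dominated by v q1 (the item always sells) and prices above v q2
  by v q2 (the item never sells); prices in between are valuations by the intermediate value
  theorem.\<close>

lemma fixed_price_revenue_dominated_by_valuation:
  fixes v :: "real \<Rightarrow> real"
  assumes "q1 \<le> q2"
    and g: "set_integrable lborel {q1..q2} g" "(LINT q:{q1..q2}|lborel. g q) = 1"
    and v: "strict_mono_on {q1..q2} v" "continuous_on {q1..q2} v"
  obtains x where "x \<in> {q1..q2}"
    "fixed_price_revenue q1 q2 g v p \<le> fixed_price_revenue q1 q2 g v (v x)"
proof -
  have q1: "q1 \<in> {q1..q2}" and q2: "q2 \<in> {q1..q2}" using \<open>q1 \<le> q2\<close> by auto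
  consider "p \<le> v q1" | "v q1 < p" "p \<le> v q2" | "v q2 < p" by linarith
  then show ?thesis
  proof cases
    case 1
    have "{q\<in>{q1..q2}. p' \<le> v q} = {q1..q2}" if "p' \<le> v q1" for p'
      using that strict_mono_on_less_eq[OF v(1) q1] by fastforce
    then have "fixed_price_revenue q1 q2 g v p' = p'" if "p' \<le> v q1" for p'
      using that g(2) by (simp add: fixed_price_revenue_def)
    then show ?thesis using that[OF q1] 1 by simp
  next
    case 2
    then obtain x where "x \<in> {q1..q2}" "v x = p"
      using IVT'[of v q1 p q2] \<open>q1 \<le> q2\<close> v(2) by auto
    then show ?thesis using that by blast
  next
    case 3
    have never_sells: "{q\<in>{q1..q2}. p \<le> v q} = {}"
      using 3 strict_mono_on_less_eq[OF v(1) _ q2] by fastforce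
    have "fixed_price_revenue q1 q2 g v p = 0"
      unfolding fixed_price_revenue_def never_sells by (simp add: set_lebesgue_integral_def)
    moreover have "quality_cdf q1 g q2 = 1"
      using g(2) by (simp add: quality_cdf_def)
    ultimately show ?thesis
      using that[OF q2] fixed_price_revenue_at_valuation[OF g v(1) q2] by simp
  qed
qed

lemma fixed_price_revenue_optimal_valuation:
  fixes v :: "real \<Rightarrow> real"
  assumes "q1 \<le> q2"
    and g: "set_integrable lborel {q1..q2} g" "(LINT q:{q1..q2}|lborel. g q) = 1"
    and v: "strict_mono_on {q1..q2} v" "continuous_on {q1..q2} v"
  obtains x0 where "x0 \<in> {q1..q2}"
    "\<forall>x\<in>{q1..q2}. (1 - quality_cdf q1 g x) * v x \<le> (1 - quality_cdf q1 g x0) * v x0"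
    "Sup (range (fixed_price_revenue q1 q2 g v)) = (1 - quality_cdf q1 g x0) * v x0"
proof -
  have "continuous_on {q1..q2} (\<lambda>x. (1 - quality_cdf q1 g x) * v x)"
    by (intro continuous_intros continuous_on_quality_cdf[OF g(1)] v(2))
  moreover have "{q1..q2} \<noteq> {}" using \<open>q1 \<le> q2\<close> by simp
  ultimately obtain x0 where x0: "x0 \<in> {q1..q2}"
    and max: "\<forall>x\<in>{q1..q2}. (1 - quality_cdf q1 g x) * v x \<le> (1 - quality_cdf q1 g x0) * v x0"
    using continuous_attains_sup[OF compact_Icc] by blast
  note revenue = fixed_price_revenue_at_valuation[OF g v(1)]
  have "Sup (range (fixed_price_revenue q1 q2 g v)) = fixed_price_revenue q1 q2 g v (v x0)"
  proof (rule cSup_eq_maximum)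
    show "fixed_price_revenue q1 q2 g v (v x0) \<in> range (fixed_price_revenue q1 q2 g v)" by simp
    fix r assume "r \<in> range (fixed_price_revenue q1 q2 g v)"
    then obtain p where r: "r = fixed_price_revenue q1 q2 g v p" by blast
    obtain x where x: "x \<in> {q1..q2}" and "r \<le> fixed_price_revenue q1 q2 g v (v x)"
      using fixed_price_revenue_dominated_by_valuation[OF assms] r by blast
    then show "r \<le> fixed_price_revenue q1 q2 g v (v x0)"
      using max[rule_format, OF x] revenue[OF x] revenue[OF x0] by linarith
  qed
  then show ?thesis using that x0 max revenue[OF x0] by simp
qed

theorem mainTheorem4:
  fixes q1 q2 :: real and g v :: "real \<Rightarrow> real"
  assumes "q1 < q2"
    and "\<forall>q\<in>{q1..q2}. 0 \<le> g q"
    and "set_integrable lborel {q1..q2} g"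
    and "(LINT q:{q1..q2}|lborel. g q) = 1"
    and "strict_mono_on {q1..q2} v"
    and "continuous_on {q1..q2} v"
  shows "Sup {signaling_revenue q1 q2 g \<pi> p | \<pi> p.
               signaling_mechanism q1 q2 \<pi> \<and> obedient q1 q2 g v \<pi> p}
         = Sup (range (fixed_price_revenue q1 q2 g v))
       \<and> (\<exists>p\<in>v ` {q1..q2}.
            (1 - quality_cdf q1 g (inv_into {q1..q2} v p)) * p
              = Sup (range (fixed_price_revenue q1 q2 g v))
          \<and> (\<forall>p'\<in>v ` {q1..q2}.
               (1 - quality_cdf q1 g (inv_into {q1..q2} v p')) * p'
                 \<le> (1 - quality_cdf q1 g (inv_into {q1..q2} v p)) * p))"
proof -
  have inv: "inv_into {q1..q2} v (v x) = x" if "x \<in> {q1..q2}" for x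
    using inv_into_f_f[OF strict_mono_on_imp_inj_on[OF assms(5)] that] .
  obtain x0 where x0: "x0 \<in> {q1..q2}"
    "\<forall>x\<in>{q1..q2}. (1 - quality_cdf q1 g x) * v x \<le> (1 - quality_cdf q1 g x0) * v x0"
    "Sup (range (fixed_price_revenue q1 q2 g v)) = (1 - quality_cdf q1 g x0) * v x0"
    using fixed_price_revenue_optimal_valuation[OF _ assms(3-6)] assms(1) by auto
  show ?thesis
  proof (intro conjI bexI[of _ "v x0"])
    show "Sup {signaling_revenue q1 q2 g \<pi> p | \<pi> p.
               signaling_mechanism q1 q2 \<pi> \<and> obedient q1 q2 g v \<pi> p}
         = Sup (range (fixed_price_revenue q1 q2 g v))"
      using obedient_signaling_revenues_eq_fixed_price_revenues[OF assms(3,6)] by simp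
    show "(1 - quality_cdf q1 g (inv_into {q1..q2} v (v x0))) * v x0
        = Sup (range (fixed_price_revenue q1 q2 g v))"
      using inv x0 by simp
    show "\<forall>p'\<in>v ` {q1..q2}. (1 - quality_cdf q1 g (inv_into {q1..q2} v p')) * p'
        \<le> (1 - quality_cdf q1 g (inv_into {q1..q2} v (v x0))) * v x0"
      using inv x0 by auto
    show "v x0 \<in> v ` {q1..q2}" using x0 by simp
  qed
qed

end
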